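(* Let $\phi\colon F\to G$ and $\psi\colon G\to H$ be transformations (of types $|\alpha|\xrightarrow{\sigma}n\xleftarrow{\tau}|\beta|$ and $|\beta|\xrightarrow{\eta}m\xleftarrow{\theta}|\gamma|$, with $F\colon\mathbb B^\alpha\to\mathbb C$, $G\colon\mathbb B^\beta\to\mathbb C$, $H\colon\mathbb B^\gamma\to\mathbb C$) which are dinatural in all their variables. If the composite graph $\Gamma(\psi)\circ\Gamma(\phi)$ is acyclic, then $\psi\circ\phi$ is dinatural in all its variables.
   Context: Notation: for $k\in\mathbb N$, $k$ also denotes $\{1,\dots,k\}$. For $\alpha\in\{+,-\}^*$, $\mathbb B^\alpha=\mathbb B^{\alpha_1}\times\cdots\times\mathbb B^{\alpha_{|\alpha|}}$ with $\mathbb B^+=\mathbb B$, $\mathbb B^-=\mathbb B^{op}$. For $\mathbf A=(A_1,\dots,A_n)$ and $\sigma\colon k\to n$, $\mathbf A\sigma=(A_{\sigma1},\dots,A_{\sigma k})$. A morphism $f\colon A\to B$ placed in a contravariant argument is regarded as a morphism $B\to A$ of $\mathbb B^{op}$. A transformation $\phi\colon F\to G$ of type $|\alpha|\xrightarrow{\sigma}n\xleftarrow{\tau}|\beta|$ ($\sigma,\tau$ arbitrary functions) is a family $\phi_{\mathbf A}\colon F(\mathbf A\sigma)\to G(\mathbf A\tau)$, $\mathbf A\in\mathrm{Ob}(\mathbb B)^n$; $A_i$ is its $i$-th variable. $\mathbf A[X,Y/i]\sigma$ is the tuple whose $j$-th entry is $X$ if $\sigma j=i,\alpha_j=-$, $Y$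 if $\sigma j=i,\alpha_j=+$, and $A_{\sigma j}$ (or $1_{A_{\sigma j}}$ when $X,Y$ are morphisms) otherwise; $\mathbf A[X/i]=\mathbf A[X,X/i]$. $\phi$ is dinatural in its $i$-th variable if for all objects $A_j$ ($j\neq i$) and all $f\colon A\to B$: $G(\mathbf A[A,f/i]\tau)\circ\phi_{\mathbf A[A/i]}\circ F(\mathbf A[f,A/i]\sigma)=G(\mathbf A[f,B/i]\tau)\circ\phi_{\mathbf A[B/i]}\circ F(\mathbf A[B,f/i]\sigma)$. Vertical composite: with $\zeta\colon n\to l$, $\xi\colon m\to l$ a pushout of $\tau,\eta$ in finite sets, $\psi\circ\phi$ has type $|\alpha|\xrightarrow{\zeta\sigma}l\xleftarrow{\xi\theta}|\gamma|$ and components $(\psi\circ\phi)_{\mathbf A}=\psi_{\mathbf A\xi}\circ\phi_{\mathbf A\zeta}$. Composite graph $\Gamma(\psi)\circ\Gamma(\phi)$: directed bipartite graph with places the disjoint union of $|\alpha|,|\beta|,|\gamma|$ and transitions $n\sqcup m$. For $t\in n$: arc from place $j$ of the $\alpha$-block to $t$ iff $\sigma j=t,\alpha_j=+$; from $t$ to it iff $\sigma j=t,\alpha_j=-$; arc from place $j$ of the $\beta$-block to $t$ iff $\tau j=t,\beta_j=-$; from $t$ to it iff $\tau j=t,\beta_j=+$. For $t\in m$: arc from place $j$ of the $\beta$-block to $t$ iff $\eta j=t,\beta_j=+$; from $t$ to it iff $\eta j=t,\beta_j=-$; arc from place $j$ of the $\gamma$-block to $t$ iff $\theta j=t,\gamma_j=-$;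 from $t$ to it iff $\theta j=t,\gamma_j=+$. Acyclic means without directed cycles. *)

theory Defs
  imports Main
begin

(* A category, given by its objects, arrows, domain, codomain, identities and composition
   (ccomp g f = g o f). *)
record ('o,'m) category =
  cobj :: "'o set"
  carr :: "'m set"
  cdom :: "'m \<Rightarrow> 'o"
  ccod :: "'m \<Rightarrow> 'o"
  cid  :: "'o \<Rightarrow> 'm"
  ccomp :: "'m \<Rightarrow> 'm \<Rightarrow> 'm"

definition hom :: "('o,'m,'x) category_scheme \<Rightarrow> 'o \<Rightarrow> 'o \<Rightarrow> 'm set" where
  "hom C X Y = {f \<in> carr C. cdom C f = X \<and> ccod C f = Y}"

definition is_category :: "('o,'m,'x) category_scheme \<Rightarrow> bool" where
  "is_category C \<longleftrightarrow>
     (\<forall>f\<in>carr C. cdom C f \<in> cobj C \<and> ccod C f \<in> cobj C) \<and>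
     (\<forall>A\<in>cobj C. cid C A \<in> hom C A A) \<and>
     (\<forall>f\<in>carr C. \<forall>g\<in>carr C. ccod C f = cdom C g \<longrightarrow>
          ccomp C g f \<in> hom C (cdom C f) (ccod C g)) \<and>
     (\<forall>f\<in>carr C. ccomp C f (cid C (cdom C f)) = f \<and> ccomp C (cid C (ccod C f)) f = f) \<and>
     (\<forall>f\<in>carr C. \<forall>g\<in>carr C. \<forall>h\<in>carr C. ccod C f = cdom C g \<longrightarrow> ccod C g = cdom C h \<longrightarrow>
          ccomp C h (ccomp C g f) = ccomp C (ccomp C h g) f)"

(* Variance words alpha \<in> {+,-}^*: True = +, False = -.
   An object of B^alpha is a list of objects of B of length |alpha|; a morphism of B^alpha
   is a list of morphisms of B, where an entry f : A \<rightarrow> B of B in a contravariant position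
   is regarded as the morphism B \<rightarrow> A of B^op. *)

definition msrc :: "('o,'m,'x) category_scheme \<Rightarrow> bool list \<Rightarrow> 'm list \<Rightarrow> 'o list" where
  "msrc B \<alpha> fs = map (\<lambda>j. if \<alpha>!j then cdom B (fs!j) else ccod B (fs!j)) [0..<length \<alpha>]"

definition mtgt :: "('o,'m,'x) category_scheme \<Rightarrow> bool list \<Rightarrow> 'm list \<Rightarrow> 'o list" where
  "mtgt B \<alpha> fs = map (\<lambda>j. if \<alpha>!j then ccod B (fs!j) else cdom B (fs!j)) [0..<length \<alpha>]"

definition mcomp :: "('o,'m,'x) category_scheme \<Rightarrow> bool list \<Rightarrow> 'm list \<Rightarrow> 'm list \<Rightarrow> 'm list" where
  "mcomp B \<alpha> gs fs = map (\<lambda>j. if \<alpha>!j then ccomp B (gs!j) (fs!j) else ccomp B (fs!j) (gs!j)) [0..<length \<alpha>]"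

definition mvfunctor :: "('o,'m,'x) category_scheme \<Rightarrow> ('c,'d,'y) category_scheme \<Rightarrow> bool list
    \<Rightarrow> ('o list \<Rightarrow> 'c) \<Rightarrow> ('m list \<Rightarrow> 'd) \<Rightarrow> bool" where
  "mvfunctor B C \<alpha> Fo Fm \<longleftrightarrow>
     (\<forall>As. length As = length \<alpha> \<and> set As \<subseteq> cobj B \<longrightarrow> Fo As \<in> cobj C) \<and>
     (\<forall>fs. length fs = length \<alpha> \<and> set fs \<subseteq> carr B \<longrightarrow>
          Fm fs \<in> hom C (Fo (msrc B \<alpha> fs)) (Fo (mtgt B \<alpha> fs))) \<and>
     (\<forall>As. length As = length \<alpha> \<and> set As \<subseteq> cobj B \<longrightarrow> Fm (map (cid B) As) = cid C (Fo As)) \<and>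
     (\<forall>fs gs. length fs = length \<alpha> \<and> set fs \<subseteq> carr B \<and> length gs = length \<alpha> \<and> set gs \<subseteq> carr B
          \<and> mtgt B \<alpha> fs = msrc B \<alpha> gs \<longrightarrow>
          Fm (mcomp B \<alpha> gs fs) = ccomp C (Fm gs) (Fm fs))"

(* A sigma  for  sigma : k \<rightarrow> n, with k, n identified with {0..<k}, {0..<n} *)
definition reidx :: "(nat \<Rightarrow> nat) \<Rightarrow> nat \<Rightarrow> 'a list \<Rightarrow> 'a list" where
  "reidx \<sigma> k As = map (\<lambda>j. As ! (\<sigma> j)) [0..<k]"

definition is_transformation :: "('o,'m,'x) category_scheme \<Rightarrow> ('c,'d,'y) category_scheme
    \<Rightarrow> bool list \<Rightarrow> bool list \<Rightarrow> (nat \<Rightarrow> nat) \<Rightarrow> (nat \<Rightarrow> nat) \<Rightarrow> nat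
    \<Rightarrow> ('o list \<Rightarrow> 'c) \<Rightarrow> ('o list \<Rightarrow> 'c) \<Rightarrow> ('o list \<Rightarrow> 'd) \<Rightarrow> bool" where
  "is_transformation B C \<alpha> \<beta> \<sigma> \<tau> n Fo Go \<phi> \<longleftrightarrow>
     (\<forall>j<length \<alpha>. \<sigma> j < n) \<and> (\<forall>j<length \<beta>. \<tau> j < n) \<and>
     (\<forall>As. length As = n \<and> set As \<subseteq> cobj B \<longrightarrow>
        \<phi> As \<in> hom C (Fo (reidx \<sigma> (length \<alpha>) As)) (Go (reidx \<tau> (length \<beta>) As)))"

definition msubst :: "('o,'m,'x) category_scheme \<Rightarrow> bool list \<Rightarrow> (nat \<Rightarrow> nat) \<Rightarrow> 'o list
    \<Rightarrow> nat \<Rightarrow> 'm \<Rightarrow> 'm \<Rightarrow> 'm list" where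
  "msubst B \<alpha> \<sigma> As i X Y =
     map (\<lambda>j. if \<sigma> j = i then (if \<alpha>!j then Y else X) else cid B (As ! (\<sigma> j))) [0..<length \<alpha>]"

definition dinatural_in :: "('o,'m,'x) category_scheme \<Rightarrow> ('c,'d,'y) category_scheme
    \<Rightarrow> bool list \<Rightarrow> bool list \<Rightarrow> (nat \<Rightarrow> nat) \<Rightarrow> (nat \<Rightarrow> nat) \<Rightarrow> nat
    \<Rightarrow> ('m list \<Rightarrow> 'd) \<Rightarrow> ('m list \<Rightarrow> 'd) \<Rightarrow> ('o list \<Rightarrow> 'd) \<Rightarrow> nat \<Rightarrow> bool" where
  "dinatural_in B C \<alpha> \<beta> \<sigma> \<tau> n Fm Gm \<phi> i \<longleftrightarrow>
     (\<forall>As f. length As = n \<and> set As \<subseteq> cobj B \<and> f \<in> carr B \<longrightarrow>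
        (let A = cdom B f; A' = ccod B f in
         ccomp C (Gm (msubst B \<beta> \<tau> As i (cid B A) f))
           (ccomp C (\<phi> (As[i := A])) (Fm (msubst B \<alpha> \<sigma> As i f (cid B A))))
       = ccomp C (Gm (msubst B \<beta> \<tau> As i f (cid B A')))
           (ccomp C (\<phi> (As[i := A'])) (Fm (msubst B \<alpha> \<sigma> As i (cid B A') f)))))"

(* zeta : n \<rightarrow> l, xi : m \<rightarrow> l is a pushout of tau : p \<rightarrow> n, eta : p \<rightarrow> m in finite sets
   (finite sets represented, up to bijection, by {0..<q}) *)
definition is_pushout :: "nat \<Rightarrow> nat \<Rightarrow> nat \<Rightarrow> (nat \<Rightarrow> nat) \<Rightarrow> (nat \<Rightarrow> nat)
    \<Rightarrow> nat \<Rightarrow> (nat \<Rightarrow> nat) \<Rightarrow> (nat \<Rightarrow> nat) \<Rightarrow> bool" where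
  "is_pushout n m p \<tau> \<eta> l \<zeta> \<xi> \<longleftrightarrow>
     (\<forall>k<n. \<zeta> k < l) \<and> (\<forall>k<m. \<xi> k < l) \<and> (\<forall>j<p. \<zeta> (\<tau> j) = \<xi> (\<eta> j)) \<and>
     (\<forall>(q::nat) z x. (\<forall>k<n. z k < q) \<and> (\<forall>k<m. x k < q) \<and> (\<forall>j<p. z (\<tau> j) = x (\<eta> j)) \<longrightarrow>
        (\<exists>u. (\<forall>k<l. u k < q) \<and> (\<forall>k<n. u (\<zeta> k) = z k) \<and> (\<forall>k<m. u (\<xi> k) = x k) \<and>
             (\<forall>u'. (\<forall>k<l. u' k < q) \<and> (\<forall>k<n. u' (\<zeta> k) = z k) \<and> (\<forall>k<m. u' (\<xi> k) = x k)
                   \<longrightarrow> (\<forall>k<l. u' k = u k))))"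

definition vcomp :: "('c,'d,'y) category_scheme \<Rightarrow> nat \<Rightarrow> nat \<Rightarrow> (nat \<Rightarrow> nat) \<Rightarrow> (nat \<Rightarrow> nat)
    \<Rightarrow> ('o list \<Rightarrow> 'd) \<Rightarrow> ('o list \<Rightarrow> 'd) \<Rightarrow> 'o list \<Rightarrow> 'd" where
  "vcomp C n m \<zeta> \<xi> \<phi> \<psi> As = ccomp C (\<psi> (reidx \<xi> m As)) (\<phi> (reidx \<zeta> n As))"

(* nodes of the composite graph: places of the alpha-, beta-, gamma-blocks, transitions in n and m *)
datatype node = PA nat | PB nat | PC nat | TN nat | TM nat

definition comp_graph :: "bool list \<Rightarrow> bool list \<Rightarrow> bool list \<Rightarrow> (nat \<Rightarrow> nat) \<Rightarrow> (nat \<Rightarrow> nat)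
    \<Rightarrow> (nat \<Rightarrow> nat) \<Rightarrow> (nat \<Rightarrow> nat) \<Rightarrow> (node \<times> node) set" where
  "comp_graph \<alpha> \<beta> \<gamma> \<sigma> \<tau> \<eta> \<theta> =
      {(PA j, TN (\<sigma> j)) | j. j < length \<alpha> \<and> \<alpha>!j}
    \<union> {(TN (\<sigma> j), PA j) | j. j < length \<alpha> \<and> \<not> \<alpha>!j}
    \<union> {(PB j, TN (\<tau> j)) | j. j < length \<beta> \<and> \<not> \<beta>!j}
    \<union> {(TN (\<tau> j), PB j) | j. j < length \<beta> \<and> \<beta>!j}
    \<union> {(PB j, TM (\<eta> j)) | j. j < length \<beta> \<and> \<beta>!j}
    \<union> {(TM (\<eta> j), PB j) | j. j < length \<beta> \<and> \<not> \<beta>!j}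
    \<union> {(PC j, TM (\<theta> j)) | j. j < length \<gamma> \<and> \<not> \<gamma>!j}
    \<union> {(TM (\<theta> j), PC j) | j. j < length \<gamma> \<and> \<gamma>!j}"

end

theory Submission
  imports Defs
begin

text \<open>Fix a variable \<open>i\<close> of \<open>\<psi> \<circ> \<phi>\<close> and an arrow \<open>f : A \<rightarrow> A'\<close>.  The transitions of
  \<open>\<Gamma>(\<psi>) \<circ> \<Gamma>(\<phi>)\<close> lying over \<open>i\<close> are fired one at a time, each moving its variable from
  \<open>A\<close> to \<open>A'\<close>; every intermediate state determines a composite \<open>H \<circ> \<psi> \<circ> G \<circ> \<phi> \<circ> F\<close>.
  With nothing fired this is one side of the dinaturality equation of \<open>\<psi> \<circ> \<phi>\<close> in \<open>i\<close>,
  with everything fired the other.  Acyclicity lets us always fire a transition all of whose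
  successors are already fired, and such a step changes the composite by exactly one instance
  of dinaturality of \<open>\<phi>\<close> or \<open>\<psi>\<close>, whiskered by functorial images, so the composite
  never changes.\<close>

section \<open>Categories, functors and transformations\<close>

lemma cat_comp_hom:
  "is_category C \<Longrightarrow> f \<in> hom C X Y \<Longrightarrow> g \<in> hom C Y Z \<Longrightarrow> ccomp C g f \<in> hom C X Z"
  unfolding is_category_def hom_def by auto

lemma cat_assoc:
  "is_category C \<Longrightarrow> f \<in> hom C X Y \<Longrightarrow> g \<in> hom C Y Z \<Longrightarrow> h \<in> hom C Z W \<Longrightarrow>
   ccomp C h (ccomp C g f) = ccomp C (ccomp C h g) f"
  unfolding is_category_def hom_def by auto

lemma cat_comp_id_left: "is_category C \<Longrightarrow> f \<in> hom C X Y \<Longrightarrow> ccomp C (cid C Y) f = f"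
  unfolding is_category_def hom_def by auto

lemma cat_arr_objs: "is_category C \<Longrightarrow> f \<in> carr C \<Longrightarrow> cdom C f \<in> cobj C \<and> ccod C f \<in> cobj C"
  unfolding is_category_def by auto

lemma cat_id_carr: "is_category C \<Longrightarrow> X \<in> cobj C \<Longrightarrow> cid C X \<in> carr C"
  and cat_dom_id: "is_category C \<Longrightarrow> X \<in> cobj C \<Longrightarrow> cdom C (cid C X) = X"
  and cat_cod_id: "is_category C \<Longrightarrow> X \<in> cobj C \<Longrightarrow> ccod C (cid C X) = X"
  unfolding is_category_def hom_def by auto

lemma cat_assoc_inner:
  assumes "is_category C" "a \<in> hom C P Q" "b \<in> hom C R P" "c \<in> hom C S R" "d \<in> hom C T S"
  shows "ccomp C a (ccomp C b (ccomp C c d)) = ccomp C (ccomp C a (ccomp C b c)) d"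
proof -
  have "ccomp C b (ccomp C c d) = ccomp C (ccomp C b c) d"
    using cat_assoc[OF assms(1) assms(5,4,3)] .
  moreover have "ccomp C b c \<in> hom C S P" using cat_comp_hom[OF assms(1) assms(4,3)] .
  ultimately show ?thesis using cat_assoc[OF assms(1) assms(5) _ assms(2)] by simp
qed

lemma cat_regroup5:
  assumes "is_category C" "a \<in> hom C P Q" "b \<in> hom C R P" "c \<in> hom C S R" "d \<in> hom C T S"
    "e \<in> hom C U T"
  shows "ccomp C (ccomp C a b) (ccomp C c (ccomp C d e))
       = ccomp C a (ccomp C (ccomp C b (ccomp C c d)) e)"
proof -
  have cd: "ccomp C c d \<in> hom C T R" using cat_comp_hom[OF assms(1) assms(5,4)] .
  have "ccomp C (ccomp C a b) (ccomp C c (ccomp C d e))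
      = ccomp C (ccomp C a b) (ccomp C (ccomp C c d) e)"
    using cat_assoc[OF assms(1) assms(6,5,4)] by simp
  also have "\<dots> = ccomp C a (ccomp C b (ccomp C (ccomp C c d) e))"
    using cat_assoc[OF assms(1) cat_comp_hom[OF assms(1) assms(6) cd] assms(3,2)] by simp
  also have "\<dots> = ccomp C a (ccomp C (ccomp C b (ccomp C c d)) e)"
    using cat_assoc[OF assms(1) assms(6) cd assms(3)] by simp
  finally show ?thesis .
qed

lemma mvfunctor_hom:
  "mvfunctor B C \<alpha> Fo Fm \<Longrightarrow> length fs = length \<alpha> \<Longrightarrow> set fs \<subseteq> carr B \<Longrightarrow>
   Fm fs \<in> hom C (Fo (msrc B \<alpha> fs)) (Fo (mtgt B \<alpha> fs))"
  unfolding mvfunctor_def by blast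

lemma mvfunctor_mcomp:
  "mvfunctor B C \<alpha> Fo Fm \<Longrightarrow> length fs = length \<alpha> \<Longrightarrow> set fs \<subseteq> carr B \<Longrightarrow>
   length gs = length \<alpha> \<Longrightarrow> set gs \<subseteq> carr B \<Longrightarrow> mtgt B \<alpha> fs = msrc B \<alpha> gs \<Longrightarrow>
   Fm (mcomp B \<alpha> gs fs) = ccomp C (Fm gs) (Fm fs)"
  unfolding mvfunctor_def by blast

lemma mvfunctor_id:
  "mvfunctor B C \<alpha> Fo Fm \<Longrightarrow> length As = length \<alpha> \<Longrightarrow> set As \<subseteq> cobj B \<Longrightarrow>
   Fm (map (cid B) As) = cid C (Fo As)"
  unfolding mvfunctor_def by blast

lemma transformation_hom:
  "is_transformation B C \<alpha> \<beta> \<sigma> \<tau> n Fo Go \<phi> \<Longrightarrow> length As = n \<Longrightarrow> set As \<subseteq> cobj B \<Longrightarrow>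
   \<phi> As \<in> hom C (Fo (reidx \<sigma> (length \<alpha>) As)) (Go (reidx \<tau> (length \<beta>) As))"
  unfolding is_transformation_def by blast

lemma dinatural_inD:
  assumes "dinatural_in B C \<alpha> \<beta> \<sigma> \<tau> n Fm Gm \<phi> i"
    and "length As = n" "set As \<subseteq> cobj B" "f \<in> hom B A A'"
  shows "ccomp C (Gm (msubst B \<beta> \<tau> As i (cid B A) f))
           (ccomp C (\<phi> (As[i := A])) (Fm (msubst B \<alpha> \<sigma> As i f (cid B A))))
       = ccomp C (Gm (msubst B \<beta> \<tau> As i f (cid B A')))
           (ccomp C (\<phi> (As[i := A'])) (Fm (msubst B \<alpha> \<sigma> As i (cid B A') f)))"
  using assms unfolding dinatural_in_def hom_def Let_def by auto

section \<open>Substituted arrow tuples and whiskered dinaturality\<close>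

lemma length_msubst [simp]: "length (msubst B \<alpha> \<sigma> As i X Y) = length \<alpha>"
  by (simp add: msubst_def)

lemma length_mcomp [simp]: "length (mcomp B \<alpha> gs fs) = length \<alpha>"
  by (simp add: mcomp_def)

lemma msubst_carr:
  assumes "is_category B" "set As \<subseteq> cobj B" "\<forall>j<length \<alpha>. \<sigma> j < length As"
    "X \<in> carr B" "Y \<in> carr B"
  shows "set (msubst B \<alpha> \<sigma> As i X Y) \<subseteq> carr B"
  using assms by (auto simp: msubst_def intro!: cat_id_carr)

lemma msrc_msubst:
  assumes "is_category B" "set As \<subseteq> cobj B" "\<forall>j<length \<alpha>. \<sigma> j < length As" "i < length As"
    "ccod B X = c" "cdom B Y = c"
  shows "msrc B \<alpha> (msubst B \<alpha> \<sigma> As i X Y) = reidx \<sigma> (length \<alpha>) (As[i := c])"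
proof -
  have "\<And>j. j < length \<alpha> \<Longrightarrow> As ! \<sigma> j \<in> cobj B" using assms(2,3) nth_mem by blast
  then show ?thesis using assms
    by (intro nth_equalityI) (auto simp: msrc_def msubst_def reidx_def nth_list_update cat_dom_id cat_cod_id)
qed

lemma mtgt_msubst:
  assumes "is_category B" "set As \<subseteq> cobj B" "\<forall>j<length \<alpha>. \<sigma> j < length As" "i < length As"
    "cdom B X = c" "ccod B Y = c"
  shows "mtgt B \<alpha> (msubst B \<alpha> \<sigma> As i X Y) = reidx \<sigma> (length \<alpha>) (As[i := c])"
proof -
  have "\<And>j. j < length \<alpha> \<Longrightarrow> As ! \<sigma> j \<in> cobj B" using assms(2,3) nth_mem by blast
  then show ?thesis using assms
    by (intro nth_equalityI) (auto simp: mtgt_def msubst_def reidx_def nth_list_update cat_dom_id cat_cod_id)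
qed

lemma msrc_msubst_cong:
  "ccod B X = ccod B X' \<Longrightarrow> cdom B Y = cdom B Y' \<Longrightarrow>
   msrc B \<alpha> (msubst B \<alpha> \<sigma> As i X Y) = msrc B \<alpha> (msubst B \<alpha> \<sigma> As i X' Y')"
  by (intro nth_equalityI) (auto simp: msrc_def msubst_def)

lemma mtgt_msubst_cong:
  "cdom B X = cdom B X' \<Longrightarrow> ccod B Y = ccod B Y' \<Longrightarrow>
   mtgt B \<alpha> (msubst B \<alpha> \<sigma> As i X Y) = mtgt B \<alpha> (msubst B \<alpha> \<sigma> As i X' Y')"
  by (intro nth_equalityI) (auto simp: mtgt_def msubst_def)

lemma mvfunctor_msubst_hom_src:
  assumes "is_category B" "mvfunctor B C \<alpha> Fo Fm" "set As \<subseteq> cobj B"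
    "\<forall>j<length \<alpha>. \<sigma> j < length As" "i < length As"
    "X \<in> carr B" "Y \<in> carr B" "ccod B X = c" "cdom B Y = c"
  shows "Fm (msubst B \<alpha> \<sigma> As i X Y)
           \<in> hom C (Fo (reidx \<sigma> (length \<alpha>) (As[i := c]))) (Fo (mtgt B \<alpha> (msubst B \<alpha> \<sigma> As i X Y)))"
  using mvfunctor_hom[OF assms(2) length_msubst msubst_carr[where i = i, OF assms(1,3,4,6,7)]]
    msrc_msubst[OF assms(1,3,4,5,8,9)] by simp

lemma mvfunctor_msubst_hom_tgt:
  assumes "is_category B" "mvfunctor B C \<alpha> Fo Fm" "set As \<subseteq> cobj B"
    "\<forall>j<length \<alpha>. \<sigma> j < length As" "i < length As"
    "X \<in> carr B" "Y \<in> carr B" "cdom B X = c" "ccod B Y = c"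
  shows "Fm (msubst B \<alpha> \<sigma> As i X Y)
           \<in> hom C (Fo (msrc B \<alpha> (msubst B \<alpha> \<sigma> As i X Y))) (Fo (reidx \<sigma> (length \<alpha>) (As[i := c])))"
  using mvfunctor_hom[OF assms(2) length_msubst msubst_carr[where i = i, OF assms(1,3,4,6,7)]]
    mtgt_msubst[OF assms(1,3,4,5,8,9)] by simp

lemma dinatural_in_whiskered:
  assumes B: "is_category B" and C: "is_category C"
    and F: "mvfunctor B C \<alpha> Fo Fm" and G: "mvfunctor B C \<beta> Go Gm"
    and \<phi>: "is_transformation B C \<alpha> \<beta> \<sigma> \<tau> n Fo Go \<phi>"
    and din: "dinatural_in B C \<alpha> \<beta> \<sigma> \<tau> n Fm Gm \<phi> k" and k: "k < n"
    and Xs: "length Xs = n" "set Xs \<subseteq> cobj B" and f: "f \<in> hom B a0 a1"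
    and u: "length u = length \<beta>" "set u \<subseteq> carr B"
      "msrc B \<beta> u = mtgt B \<beta> (msubst B \<beta> \<tau> Xs k (cid B a0) f)"
    and v: "length v = length \<alpha>" "set v \<subseteq> carr B"
      "mtgt B \<alpha> v = msrc B \<alpha> (msubst B \<alpha> \<sigma> Xs k f (cid B a0))"
  shows "ccomp C (Gm (mcomp B \<beta> u (msubst B \<beta> \<tau> Xs k (cid B a0) f)))
           (ccomp C (\<phi> (Xs[k := a0])) (Fm (mcomp B \<alpha> (msubst B \<alpha> \<sigma> Xs k f (cid B a0)) v)))
       = ccomp C (Gm (mcomp B \<beta> u (msubst B \<beta> \<tau> Xs k f (cid B a1))))
           (ccomp C (\<phi> (Xs[k := a1])) (Fm (mcomp B \<alpha> (msubst B \<alpha> \<sigma> Xs k (cid B a1) f) v)))"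
proof -
  let ?g0 = "msubst B \<beta> \<tau> Xs k (cid B a0) f" and ?g1 = "msubst B \<beta> \<tau> Xs k f (cid B a1)"
  let ?e0 = "msubst B \<alpha> \<sigma> Xs k f (cid B a0)" and ?e1 = "msubst B \<alpha> \<sigma> Xs k (cid B a1) f"
  have f': "f \<in> carr B" "cdom B f = a0" "ccod B f = a1" "a0 \<in> cobj B" "a1 \<in> cobj B"
    using f cat_arr_objs[OF B] by (auto simp: hom_def)
  have ids: "cid B a0 \<in> carr B" "cid B a1 \<in> carr B"
    "cdom B (cid B a0) = a0" "ccod B (cid B a1) = a1" "ccod B (cid B a0) = a0" "cdom B (cid B a1) = a1"
    using f' by (simp_all add: B cat_id_carr cat_dom_id cat_cod_id)
  have \<sigma>\<tau>: "\<forall>j<length \<alpha>. \<sigma> j < length Xs" "\<forall>j<length \<beta>. \<tau> j < length Xs"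
    using \<phi> Xs by (auto simp: is_transformation_def)
  have carr: "set ?g0 \<subseteq> carr B" "set ?g1 \<subseteq> carr B" "set ?e0 \<subseteq> carr B" "set ?e1 \<subseteq> carr B"
    using B Xs \<sigma>\<tau> f' ids by (simp_all add: msubst_carr)
  have same: "mtgt B \<beta> ?g1 = mtgt B \<beta> ?g0" "msrc B \<alpha> ?e1 = msrc B \<alpha> ?e0"
    using f' ids by (simp_all add: mtgt_msubst_cong msrc_msubst_cong)
  have split: "Gm (mcomp B \<beta> u ?g0) = ccomp C (Gm u) (Gm ?g0)" "Gm (mcomp B \<beta> u ?g1) = ccomp C (Gm u) (Gm ?g1)"
    "Fm (mcomp B \<alpha> ?e0 v) = ccomp C (Fm ?e0) (Fm v)" "Fm (mcomp B \<alpha> ?e1 v) = ccomp C (Fm ?e1) (Fm v)"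
    by (intro mvfunctor_mcomp[OF G] mvfunctor_mcomp[OF F]; use u v carr same in simp)+
  have homs: "Gm u \<in> hom C (Go (mtgt B \<beta> ?g0)) (Go (mtgt B \<beta> u))"
    "Gm ?g0 \<in> hom C (Go (reidx \<tau> (length \<beta>) (Xs[k := a0]))) (Go (mtgt B \<beta> ?g0))"
    "Gm ?g1 \<in> hom C (Go (reidx \<tau> (length \<beta>) (Xs[k := a1]))) (Go (mtgt B \<beta> ?g1))"
    "Fm ?e0 \<in> hom C (Fo (msrc B \<alpha> ?e0)) (Fo (reidx \<sigma> (length \<alpha>) (Xs[k := a0])))"
    "Fm ?e1 \<in> hom C (Fo (msrc B \<alpha> ?e1)) (Fo (reidx \<sigma> (length \<alpha>) (Xs[k := a1])))"
    "Fm v \<in> hom C (Fo (msrc B \<alpha> v)) (Fo (msrc B \<alpha> ?e0))"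
    using mvfunctor_hom[OF G, of u] mvfunctor_hom[OF F, of v] u v
      mvfunctor_msubst_hom_src[OF B G Xs(2) \<sigma>\<tau>(2)] mvfunctor_msubst_hom_tgt[OF B F Xs(2) \<sigma>\<tau>(1)]
    by (simp_all add: Xs k f' ids)
  have \<phi>s: "\<phi> (Xs[k := a]) \<in> hom C (Fo (reidx \<sigma> (length \<alpha>) (Xs[k := a]))) (Go (reidx \<tau> (length \<beta>) (Xs[k := a])))"
    if "a \<in> cobj B" for a
    using transformation_hom[OF \<phi>] Xs that by (simp add: set_update_subsetI)
  have "ccomp C (ccomp C (Gm u) (Gm ?g0)) (ccomp C (\<phi> (Xs[k := a0])) (ccomp C (Fm ?e0) (Fm v)))
      = ccomp C (Gm u) (ccomp C (ccomp C (Gm ?g0) (ccomp C (\<phi> (Xs[k := a0])) (Fm ?e0))) (Fm v))"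
    using cat_regroup5[OF C homs(1) homs(2) \<phi>s[OF f'(4)] homs(4) homs(6)] .
  also have "\<dots> = ccomp C (Gm u) (ccomp C (ccomp C (Gm ?g1) (ccomp C (\<phi> (Xs[k := a1])) (Fm ?e1))) (Fm v))"
    using dinatural_inD[OF din Xs f] by simp
  also have "\<dots> = ccomp C (ccomp C (Gm u) (Gm ?g1)) (ccomp C (\<phi> (Xs[k := a1])) (ccomp C (Fm ?e1) (Fm v)))"
    using cat_regroup5[OF C homs(1) homs(3)[unfolded same] \<phi>s[OF f'(5)] homs(5)[unfolded same] homs(6)] by simp
  finally show ?thesis unfolding split .
qed

section \<open>Firing the transitions over one variable\<close>

lemma finite_comp_graph: "finite (comp_graph \<alpha> \<beta> \<gamma> \<sigma> \<tau> \<eta> \<theta>)"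
  unfolding comp_graph_def by (auto intro!: finite_image_set)

locale vcomp_dinaturality =
  fixes B :: "('o,'m) category" and C :: "('c,'d) category"
    and \<alpha> \<beta> \<gamma> :: "bool list"
    and \<sigma> \<tau> \<eta> \<theta> \<zeta> \<xi> :: "nat \<Rightarrow> nat" and n m l :: nat
    and Fo Go Ho :: "'o list \<Rightarrow> 'c" and Fm Gm Hm :: "'m list \<Rightarrow> 'd"
    and \<phi> \<psi> :: "'o list \<Rightarrow> 'd"
    and i :: nat and As :: "'o list" and f :: 'm
  assumes catB: "is_category B" and catC: "is_category C"
    and funF: "mvfunctor B C \<alpha> Fo Fm" and funG: "mvfunctor B C \<beta> Go Gm"
    and funH: "mvfunctor B C \<gamma> Ho Hm"
    and trans_\<phi>: "is_transformation B C \<alpha> \<beta> \<sigma> \<tau> n Fo Go \<phi>"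
    and trans_\<psi>: "is_transformation B C \<beta> \<gamma> \<eta> \<theta> m Go Ho \<psi>"
    and dinat_\<phi>: "\<forall>k<n. dinatural_in B C \<alpha> \<beta> \<sigma> \<tau> n Fm Gm \<phi> k"
    and dinat_\<psi>: "\<forall>k<m. dinatural_in B C \<beta> \<gamma> \<eta> \<theta> m Gm Hm \<psi> k"
    and pushout: "is_pushout n m (length \<beta>) \<tau> \<eta> l \<zeta> \<xi>"
    and length_As: "length As = l" and As_objs: "set As \<subseteq> cobj B"
    and f_arr: "f \<in> carr B"
begin

abbreviation "a0 \<equiv> cdom B f"
abbreviation "a1 \<equiv> ccod B f"

lemma index_bounds [simp]:
  "j < length \<alpha> \<Longrightarrow> \<sigma> j < n" "j < length \<beta> \<Longrightarrow> \<tau> j < n"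
  "j < length \<beta> \<Longrightarrow> \<eta> j < m" "j < length \<gamma> \<Longrightarrow> \<theta> j < m"
  "k < n \<Longrightarrow> \<zeta> k < l" "k < m \<Longrightarrow> \<xi> k < l"
  using trans_\<phi> trans_\<psi> pushout by (simp_all add: is_transformation_def is_pushout_def)

lemma pushout_commutes: "j < length \<beta> \<Longrightarrow> \<xi> (\<eta> j) = \<zeta> (\<tau> j)"
  using pushout by (simp add: is_pushout_def)

lemma objs_in_cobj [simp]:
  "k < l \<Longrightarrow> As ! k \<in> cobj B" "a0 \<in> cobj B" "a1 \<in> cobj B" "f \<in> carr B"
  using As_objs length_As cat_arr_objs[OF catB f_arr] f_arr by auto

lemma f_hom: "f \<in> hom B a0 a1"
  using f_arr by (simp add: hom_def)

lemma id_facts [simp]: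
  "X \<in> cobj B \<Longrightarrow> cid B X \<in> carr B" "X \<in> cobj B \<Longrightarrow> cdom B (cid B X) = X"
  "X \<in> cobj B \<Longrightarrow> ccod B (cid B X) = X"
  using catB by (simp_all add: cat_id_carr cat_dom_id cat_cod_id)

lemma comp_id_facts [simp]:
  "g \<in> carr B \<Longrightarrow> ccod B g = Y \<Longrightarrow> ccomp B (cid B Y) g = g"
  "g \<in> carr B \<Longrightarrow> cdom B g = Y \<Longrightarrow> ccomp B g (cid B Y) = g"
  using catB by (auto simp: is_category_def)

text \<open>A state \<open>S\<close> is the set of transitions over the variable \<open>i\<close> that have already been fired:
  a fired transition carries the object \<open>a1\<close>, an unfired one \<open>a0\<close>.  \<open>advance s t\<close> is the
  arrow from the object of stage \<open>s\<close> to that of stage \<open>t\<close>; it is only meaningful for \<open>s \<longrightarrow> t\<close>,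
  which for the arrows of \<open>G\<close> is what \<open>successor_closed\<close> guarantees.\<close>

definition advance :: "bool \<Rightarrow> bool \<Rightarrow> 'm" where
  "advance s t = (if s then cid B a1 else if t then f else cid B a0)"

definition node_obj :: "node set \<Rightarrow> node \<Rightarrow> 'o" where
  "node_obj S x = (case x of
       TN k \<Rightarrow> if \<zeta> k = i then (if TN k \<in> S then a1 else a0) else As ! \<zeta> k
     | TM k \<Rightarrow> if \<xi> k = i then (if TM k \<in> S then a1 else a0) else As ! \<xi> k
     | _ \<Rightarrow> a0)"

definition phi_objs :: "node set \<Rightarrow> 'o list" where
  "phi_objs S = map (\<lambda>k. node_obj S (TN k)) [0..<n]"

definition psi_objs :: "node set \<Rightarrow> 'o list" where
  "psi_objs S = map (\<lambda>k. node_obj S (TM k)) [0..<m]"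

definition F_arrs :: "node set \<Rightarrow> 'm list" where
  "F_arrs S = map (\<lambda>j. if \<zeta> (\<sigma> j) = i
       then (if \<alpha>!j then advance False (TN (\<sigma> j) \<in> S) else advance (TN (\<sigma> j) \<in> S) True)
       else cid B (As ! \<zeta> (\<sigma> j))) [0..<length \<alpha>]"

definition G_arrs :: "node set \<Rightarrow> 'm list" where
  "G_arrs S = map (\<lambda>j. if \<zeta> (\<tau> j) = i
       then (if \<beta>!j then advance (TN (\<tau> j) \<in> S) (TM (\<eta> j) \<in> S)
             else advance (TM (\<eta> j) \<in> S) (TN (\<tau> j) \<in> S))
       else cid B (As ! \<zeta> (\<tau> j))) [0..<length \<beta>]"

definition H_arrs :: "node set \<Rightarrow> 'm list" where
  "H_arrs S = map (\<lambda>j. if \<xi> (\<theta> j) = i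
       then (if \<gamma>!j then advance (TM (\<theta> j) \<in> S) True else advance False (TM (\<theta> j) \<in> S))
       else cid B (As ! \<xi> (\<theta> j))) [0..<length \<gamma>]"

definition F_src :: "'o list" where
  "F_src = map (\<lambda>j. if \<zeta> (\<sigma> j) = i then (if \<alpha>!j then a0 else a1) else As ! \<zeta> (\<sigma> j))
     [0..<length \<alpha>]"

definition H_tgt :: "'o list" where
  "H_tgt = map (\<lambda>j. if \<xi> (\<theta> j) = i then (if \<gamma>!j then a1 else a0) else As ! \<xi> (\<theta> j))
     [0..<length \<gamma>]"

definition successor_closed :: "node set \<Rightarrow> bool" where
  "successor_closed S \<longleftrightarrow> (\<forall>j<length \<beta>. \<zeta> (\<tau> j) = i \<longrightarrow>
     (if \<beta>!j then TN (\<tau> j) \<in> S \<longrightarrow> TM (\<eta> j) \<in> S else TM (\<eta> j) \<in> S \<longrightarrow> TN (\<tau> j) \<in> S))"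

definition state_comp :: "node set \<Rightarrow> 'd" where
  "state_comp S = ccomp C (Hm (H_arrs S)) (ccomp C (\<psi> (psi_objs S))
     (ccomp C (Gm (G_arrs S)) (ccomp C (\<phi> (phi_objs S)) (Fm (F_arrs S)))))"

definition fibre :: "node set" where
  "fibre = {TN k | k. k < n \<and> \<zeta> k = i} \<union> {TM k | k. k < m \<and> \<xi> k = i}"

lemma advance_carr [simp]: "advance s t \<in> carr B"
  by (simp add: advance_def)

lemma advance_dom [simp]: "cdom B (advance s t) = (if s then a1 else a0)"
  by (simp add: advance_def)

lemma advance_cod [simp]: "(s \<longrightarrow> t) \<Longrightarrow> ccod B (advance s t) = (if t then a1 else a0)"
  by (simp add: advance_def)

lemma node_obj_TN [simp]: "k < n \<Longrightarrow> node_obj S (TN k) \<in> cobj B"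
  and node_obj_TM [simp]: "k < m \<Longrightarrow> node_obj S (TM k) \<in> cobj B"
  by (auto simp: node_obj_def)

lemma length_state_lists [simp]:
  "length (phi_objs S) = n" "length (psi_objs S) = m" "length (F_arrs S) = length \<alpha>"
  "length (G_arrs S) = length \<beta>" "length (H_arrs S) = length \<gamma>"
  by (simp_all add: phi_objs_def psi_objs_def F_arrs_def G_arrs_def H_arrs_def)

lemma nth_state_objs [simp]:
  "k < n \<Longrightarrow> phi_objs S ! k = node_obj S (TN k)" "k < m \<Longrightarrow> psi_objs S ! k = node_obj S (TM k)"
  by (simp_all add: phi_objs_def psi_objs_def)

lemma state_objs_in_cobj: "set (phi_objs S) \<subseteq> cobj B" "set (psi_objs S) \<subseteq> cobj B"
  by (auto simp: phi_objs_def psi_objs_def)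

lemma state_arrs_carr: "set (F_arrs S) \<subseteq> carr B" "set (G_arrs S) \<subseteq> carr B" "set (H_arrs S) \<subseteq> carr B"
  by (auto simp: F_arrs_def G_arrs_def H_arrs_def)

lemma F_arrs_ends:
  "msrc B \<alpha> (F_arrs S) = F_src" "mtgt B \<alpha> (F_arrs S) = reidx \<sigma> (length \<alpha>) (phi_objs S)"
  by (rule nth_equalityI; auto simp: msrc_def mtgt_def F_arrs_def F_src_def reidx_def node_obj_def)+

lemma H_arrs_ends:
  "msrc B \<gamma> (H_arrs S) = reidx \<theta> (length \<gamma>) (psi_objs S)" "mtgt B \<gamma> (H_arrs S) = H_tgt"
  by (rule nth_equalityI; auto simp: msrc_def mtgt_def H_arrs_def H_tgt_def reidx_def node_obj_def)+

lemma G_arrs_ends: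
  assumes "successor_closed S"
  shows "msrc B \<beta> (G_arrs S) = reidx \<tau> (length \<beta>) (phi_objs S)"
    "mtgt B \<beta> (G_arrs S) = reidx \<eta> (length \<beta>) (psi_objs S)"
  using assms
  by (rule_tac nth_equalityI;
      auto simp: msrc_def mtgt_def G_arrs_def reidx_def node_obj_def successor_closed_def
        pushout_commutes)+

lemma state_homs:
  "Fm (F_arrs S) \<in> hom C (Fo F_src) (Fo (reidx \<sigma> (length \<alpha>) (phi_objs S)))"
  "\<phi> (phi_objs S) \<in> hom C (Fo (reidx \<sigma> (length \<alpha>) (phi_objs S))) (Go (reidx \<tau> (length \<beta>) (phi_objs S)))"
  "\<psi> (psi_objs S) \<in> hom C (Go (reidx \<eta> (length \<beta>) (psi_objs S))) (Ho (reidx \<theta> (length \<gamma>) (psi_objs S)))"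
  "Hm (H_arrs S) \<in> hom C (Ho (reidx \<theta> (length \<gamma>) (psi_objs S))) (Ho H_tgt)"
  using mvfunctor_hom[OF funF, of "F_arrs S"] mvfunctor_hom[OF funH, of "H_arrs S"]
    transformation_hom[OF trans_\<phi>, of "phi_objs S"] transformation_hom[OF trans_\<psi>, of "psi_objs S"]
  by (simp_all add: state_arrs_carr state_objs_in_cobj F_arrs_ends H_arrs_ends)

lemma G_arrs_hom:
  "successor_closed S \<Longrightarrow>
   Gm (G_arrs S) \<in> hom C (Go (reidx \<tau> (length \<beta>) (phi_objs S))) (Go (reidx \<eta> (length \<beta>) (psi_objs S)))"
  using mvfunctor_hom[OF funG, of "G_arrs S"] by (simp add: state_arrs_carr G_arrs_ends)

lemma unfired_TN_has_no_fired_predecessor: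
  assumes "successor_closed S" "TN k \<notin> S" "j < length \<beta>" "\<tau> j = k" "\<zeta> k = i" "\<not> \<beta>!j"
  shows "TM (\<eta> j) \<notin> S"
  using assms by (auto simp: successor_closed_def)

lemma unfired_TM_has_no_fired_predecessor:
  assumes "successor_closed S" "TM k \<notin> S" "j < length \<beta>" "\<eta> j = k" "\<xi> k = i" "\<beta>!j"
  shows "TN (\<tau> j) \<notin> S"
  using assms pushout_commutes[of j] by (auto simp: successor_closed_def)

text \<open>Firing a transition \<open>TN k\<close> whose successors are fired changes exactly the \<open>k\<close>-th
  variable of \<open>\<phi>\<close>; the arrows of \<open>G\<close> and \<open>F\<close> then factor through the two sides of the
  dinaturality hexagon of \<open>\<phi>\<close> in \<open>k\<close>.\<close>

lemma G_arrs_factor_TN: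
  assumes k: "k < n" "\<zeta> k = i" and unfired: "TN k \<notin> S" and closed: "successor_closed S"
    and succ: "\<forall>j<length \<beta>. \<tau> j = k \<and> \<beta>!j \<longrightarrow> TM (\<eta> j) \<in> S"
  obtains u where "length u = length \<beta>" "set u \<subseteq> carr B"
    "msrc B \<beta> u = mtgt B \<beta> (msubst B \<beta> \<tau> (phi_objs S) k (cid B a0) f)"
    "G_arrs S = mcomp B \<beta> u (msubst B \<beta> \<tau> (phi_objs S) k (cid B a0) f)"
    "G_arrs (insert (TN k) S) = mcomp B \<beta> u (msubst B \<beta> \<tau> (phi_objs S) k f (cid B a1))"
proof
  let ?u = "map (\<lambda>j. if \<tau> j = k then (if \<beta>!j then cid B a1 else cid B a0) else G_arrs S ! j)
    [0..<length \<beta>]"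
  note no_pred = unfired_TN_has_no_fired_predecessor[OF closed unfired _ _ k(2)]
  show "length ?u = length \<beta>" "set ?u \<subseteq> carr B"
    using state_arrs_carr[of S] by auto
  show "msrc B \<beta> ?u = mtgt B \<beta> (msubst B \<beta> \<tau> (phi_objs S) k (cid B a0) f)"
    using closed unfired k
    by (intro nth_equalityI) (auto simp: msubst_def msrc_def mtgt_def G_arrs_def node_obj_def
        successor_closed_def)
  show "G_arrs S = mcomp B \<beta> ?u (msubst B \<beta> \<tau> (phi_objs S) k (cid B a0) f)"
    "G_arrs (insert (TN k) S) = mcomp B \<beta> ?u (msubst B \<beta> \<tau> (phi_objs S) k f (cid B a1))"
    using closed unfired k succ no_pred
    by (rule_tac nth_equalityI; auto simp: msubst_def mcomp_def G_arrs_def node_obj_def advance_def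
        successor_closed_def)+
qed

lemma F_arrs_factor_TN:
  assumes k: "k < n" "\<zeta> k = i" and unfired: "TN k \<notin> S"
  obtains v where "length v = length \<alpha>" "set v \<subseteq> carr B"
    "mtgt B \<alpha> v = msrc B \<alpha> (msubst B \<alpha> \<sigma> (phi_objs S) k f (cid B a0))"
    "F_arrs S = mcomp B \<alpha> (msubst B \<alpha> \<sigma> (phi_objs S) k f (cid B a0)) v"
    "F_arrs (insert (TN k) S) = mcomp B \<alpha> (msubst B \<alpha> \<sigma> (phi_objs S) k (cid B a1) f) v"
proof
  let ?v = "map (\<lambda>j. if \<sigma> j = k then (if \<alpha>!j then cid B a0 else cid B a1) else F_arrs S ! j)
    [0..<length \<alpha>]"
  show "length ?v = length \<alpha>" "set ?v \<subseteq> carr B"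
    using state_arrs_carr[of S] by auto
  show "mtgt B \<alpha> ?v = msrc B \<alpha> (msubst B \<alpha> \<sigma> (phi_objs S) k f (cid B a0))"
    using unfired k
    by (intro nth_equalityI) (auto simp: msubst_def msrc_def mtgt_def F_arrs_def node_obj_def)
  show "F_arrs S = mcomp B \<alpha> (msubst B \<alpha> \<sigma> (phi_objs S) k f (cid B a0)) ?v"
    "F_arrs (insert (TN k) S) = mcomp B \<alpha> (msubst B \<alpha> \<sigma> (phi_objs S) k (cid B a1) f) ?v"
    using unfired k
    by (rule_tac nth_equalityI; auto simp: msubst_def mcomp_def F_arrs_def node_obj_def advance_def)+
qed

lemma H_arrs_factor_TM:
  assumes k: "k < m" "\<xi> k = i" and unfired: "TM k \<notin> S"
  obtains w where "length w = length \<gamma>" "set w \<subseteq> carr B"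
    "msrc B \<gamma> w = mtgt B \<gamma> (msubst B \<gamma> \<theta> (psi_objs S) k (cid B a0) f)"
    "H_arrs S = mcomp B \<gamma> w (msubst B \<gamma> \<theta> (psi_objs S) k (cid B a0) f)"
    "H_arrs (insert (TM k) S) = mcomp B \<gamma> w (msubst B \<gamma> \<theta> (psi_objs S) k f (cid B a1))"
proof
  let ?w = "map (\<lambda>j. if \<theta> j = k then (if \<gamma>!j then cid B a1 else cid B a0) else H_arrs S ! j)
    [0..<length \<gamma>]"
  show "length ?w = length \<gamma>" "set ?w \<subseteq> carr B"
    using state_arrs_carr[of S] by auto
  show "msrc B \<gamma> ?w = mtgt B \<gamma> (msubst B \<gamma> \<theta> (psi_objs S) k (cid B a0) f)"
    using unfired k
    by (intro nth_equalityI) (auto simp: msubst_def msrc_def mtgt_def H_arrs_def node_obj_def)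
  show "H_arrs S = mcomp B \<gamma> ?w (msubst B \<gamma> \<theta> (psi_objs S) k (cid B a0) f)"
    "H_arrs (insert (TM k) S) = mcomp B \<gamma> ?w (msubst B \<gamma> \<theta> (psi_objs S) k f (cid B a1))"
    using unfired k
    by (rule_tac nth_equalityI; auto simp: msubst_def mcomp_def H_arrs_def node_obj_def advance_def)+
qed

lemma G_arrs_factor_TM:
  assumes k: "k < m" "\<xi> k = i" and unfired: "TM k \<notin> S" and closed: "successor_closed S"
    and succ: "\<forall>j<length \<beta>. \<eta> j = k \<and> \<not> \<beta>!j \<longrightarrow> TN (\<tau> j) \<in> S"
  obtains v where "length v = length \<beta>" "set v \<subseteq> carr B"
    "mtgt B \<beta> v = msrc B \<beta> (msubst B \<beta> \<eta> (psi_objs S) k f (cid B a0))"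
    "G_arrs S = mcomp B \<beta> (msubst B \<beta> \<eta> (psi_objs S) k f (cid B a0)) v"
    "G_arrs (insert (TM k) S) = mcomp B \<beta> (msubst B \<beta> \<eta> (psi_objs S) k (cid B a1) f) v"
proof
  let ?v = "map (\<lambda>j. if \<eta> j = k then (if \<beta>!j then cid B a0 else cid B a1) else G_arrs S ! j)
    [0..<length \<beta>]"
  note no_pred = unfired_TM_has_no_fired_predecessor[OF closed unfired _ _ k(2)]
  have over_i: "\<zeta> (\<tau> j) = i" if "j < length \<beta>" "\<eta> j = k" for j
    using pushout_commutes[OF that(1)] that(2) k(2) by simp
  show "length ?v = length \<beta>" "set ?v \<subseteq> carr B"
    using state_arrs_carr[of S] by auto
  show "mtgt B \<beta> ?v = msrc B \<beta> (msubst B \<beta> \<eta> (psi_objs S) k f (cid B a0))"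
    using closed unfired k
    by (intro nth_equalityI) (auto simp: msubst_def msrc_def mtgt_def G_arrs_def node_obj_def
        successor_closed_def pushout_commutes)
  have closed_at: "if \<beta>!j then TN (\<tau> j) \<in> S \<longrightarrow> TM (\<eta> j) \<in> S else TM (\<eta> j) \<in> S \<longrightarrow> TN (\<tau> j) \<in> S"
    if "j < length \<beta>" "\<zeta> (\<tau> j) = i" for j
    using closed that by (simp add: successor_closed_def)
  show "G_arrs S = mcomp B \<beta> (msubst B \<beta> \<eta> (psi_objs S) k f (cid B a0)) ?v"
  proof (rule nth_equalityI)
    fix j assume "j < length (G_arrs S)"
    then show "G_arrs S ! j = mcomp B \<beta> (msubst B \<beta> \<eta> (psi_objs S) k f (cid B a0)) ?v ! j"
      using closed_at[of j] unfired k succ no_pred[of j] over_i[of j] pushout_commutes[of j]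
      by (cases "\<eta> j = k") (auto simp: msubst_def mcomp_def G_arrs_def node_obj_def advance_def)
  qed simp
  show "G_arrs (insert (TM k) S) = mcomp B \<beta> (msubst B \<beta> \<eta> (psi_objs S) k (cid B a1) f) ?v"
  proof (rule nth_equalityI)
    fix j assume "j < length (G_arrs (insert (TM k) S))"
    then show "G_arrs (insert (TM k) S) ! j
        = mcomp B \<beta> (msubst B \<beta> \<eta> (psi_objs S) k (cid B a1) f) ?v ! j"
      using closed_at[of j] unfired k succ no_pred[of j] over_i[of j] pushout_commutes[of j]
      by (cases "\<eta> j = k") (auto simp: msubst_def mcomp_def G_arrs_def node_obj_def advance_def)
  qed simp
qed

lemma state_comp_fire_TN:
  assumes k: "k < n" "\<zeta> k = i" and unfired: "TN k \<notin> S" and closed: "successor_closed S"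
    and succ: "\<forall>j<length \<beta>. \<tau> j = k \<and> \<beta>!j \<longrightarrow> TM (\<eta> j) \<in> S"
  shows "state_comp (insert (TN k) S) = state_comp S"
proof -
  let ?X = "phi_objs S" and ?S' = "insert (TN k) S"
  let ?g0 = "msubst B \<beta> \<tau> ?X k (cid B a0) f" and ?g1 = "msubst B \<beta> \<tau> ?X k f (cid B a1)"
  let ?e0 = "msubst B \<alpha> \<sigma> ?X k f (cid B a0)" and ?e1 = "msubst B \<alpha> \<sigma> ?X k (cid B a1) f"
  obtain u where u: "length u = length \<beta>" "set u \<subseteq> carr B" "msrc B \<beta> u = mtgt B \<beta> ?g0"
    "G_arrs S = mcomp B \<beta> u ?g0" "G_arrs ?S' = mcomp B \<beta> u ?g1"
    using G_arrs_factor_TN[OF k unfired closed succ] .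
  obtain v where v: "length v = length \<alpha>" "set v \<subseteq> carr B" "mtgt B \<alpha> v = msrc B \<alpha> ?e0"
    "F_arrs S = mcomp B \<alpha> ?e0 v" "F_arrs ?S' = mcomp B \<alpha> ?e1 v"
    using F_arrs_factor_TN[OF k unfired] .
  have objs: "?X[k := a0] = ?X" "?X[k := a1] = phi_objs ?S'"
    by (auto intro!: nth_equalityI simp: k unfired nth_list_update node_obj_def)
  have unchanged: "psi_objs ?S' = psi_objs S" "H_arrs ?S' = H_arrs S"
    by (auto intro!: nth_equalityI simp: node_obj_def H_arrs_def)
  have "ccomp C (Gm (G_arrs S)) (ccomp C (\<phi> ?X) (Fm (F_arrs S)))
      = ccomp C (Gm (G_arrs ?S')) (ccomp C (\<phi> (phi_objs ?S')) (Fm (F_arrs ?S')))"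
    using dinatural_in_whiskered[OF catB catC funF funG trans_\<phi> _ k(1) _ _ f_hom u(1-3) v(1-3)]
      dinat_\<phi> k state_objs_in_cobj
    by (simp add: u(4,5) v(4,5) objs)
  then show ?thesis
    by (simp add: state_comp_def unchanged)
qed

lemma state_comp_regroup:
  assumes "successor_closed S"
  shows "state_comp S = ccomp C (ccomp C (Hm (H_arrs S)) (ccomp C (\<psi> (psi_objs S)) (Gm (G_arrs S))))
           (ccomp C (\<phi> (phi_objs S)) (Fm (F_arrs S)))"
  unfolding state_comp_def
  using cat_assoc_inner[OF catC state_homs(4) state_homs(3) G_arrs_hom[OF assms]
      cat_comp_hom[OF catC state_homs(1,2)]] .

lemma state_comp_fire_TM:
  assumes k: "k < m" "\<xi> k = i" and unfired: "TM k \<notin> S" and closed: "successor_closed S"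
    and succ: "\<forall>j<length \<beta>. \<eta> j = k \<and> \<not> \<beta>!j \<longrightarrow> TN (\<tau> j) \<in> S"
  shows "state_comp (insert (TM k) S) = state_comp S"
proof -
  let ?Y = "psi_objs S" and ?S' = "insert (TM k) S"
  let ?h0 = "msubst B \<gamma> \<theta> ?Y k (cid B a0) f" and ?h1 = "msubst B \<gamma> \<theta> ?Y k f (cid B a1)"
  let ?g0 = "msubst B \<beta> \<eta> ?Y k f (cid B a0)" and ?g1 = "msubst B \<beta> \<eta> ?Y k (cid B a1) f"
  obtain w where w: "length w = length \<gamma>" "set w \<subseteq> carr B" "msrc B \<gamma> w = mtgt B \<gamma> ?h0"
    "H_arrs S = mcomp B \<gamma> w ?h0" "H_arrs ?S' = mcomp B \<gamma> w ?h1"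
    using H_arrs_factor_TM[OF k unfired] .
  obtain v where v: "length v = length \<beta>" "set v \<subseteq> carr B" "mtgt B \<beta> v = msrc B \<beta> ?g0"
    "G_arrs S = mcomp B \<beta> ?g0 v" "G_arrs ?S' = mcomp B \<beta> ?g1 v"
    using G_arrs_factor_TM[OF k unfired closed succ] .
  have objs: "?Y[k := a0] = ?Y" "?Y[k := a1] = psi_objs ?S'"
    by (auto intro!: nth_equalityI simp: k unfired nth_list_update node_obj_def)
  have unchanged: "phi_objs ?S' = phi_objs S" "F_arrs ?S' = F_arrs S"
    by (auto intro!: nth_equalityI simp: node_obj_def F_arrs_def)
  have closed': "successor_closed ?S'"
    using closed succ by (auto simp: successor_closed_def)
  have "ccomp C (Hm (H_arrs S)) (ccomp C (\<psi> ?Y) (Gm (G_arrs S)))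
      = ccomp C (Hm (H_arrs ?S')) (ccomp C (\<psi> (psi_objs ?S')) (Gm (G_arrs ?S')))"
    using dinatural_in_whiskered[OF catB catC funG funH trans_\<psi> _ k(1) _ _ f_hom w(1-3) v(1-3)]
      dinat_\<psi> k state_objs_in_cobj
    by (simp add: w(4,5) v(4,5) objs)
  then show ?thesis
    by (simp add: state_comp_regroup[OF closed] state_comp_regroup[OF closed'] unchanged)
qed

lemma state_comp_identity_G:
  assumes closed: "successor_closed S"
    and G_id: "G_arrs S = map (cid B) (reidx \<tau> (length \<beta>) (phi_objs S))"
    and meet: "reidx \<tau> (length \<beta>) (phi_objs S) = reidx \<eta> (length \<beta>) (psi_objs S)"
  shows "state_comp S
    = ccomp C (Hm (H_arrs S)) (ccomp C (ccomp C (\<psi> (psi_objs S)) (\<phi> (phi_objs S))) (Fm (F_arrs S)))"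
proof -
  have "Gm (G_arrs S) = cid C (Go (reidx \<tau> (length \<beta>) (phi_objs S)))"
    unfolding G_id using state_objs_in_cobj(1)
    by (intro mvfunctor_id[OF funG]) (auto simp: reidx_def)
  moreover have "ccomp C (cid C (Go (reidx \<tau> (length \<beta>) (phi_objs S))))
      (ccomp C (\<phi> (phi_objs S)) (Fm (F_arrs S))) = ccomp C (\<phi> (phi_objs S)) (Fm (F_arrs S))"
    using cat_comp_id_left[OF catC cat_comp_hom[OF catC state_homs(1,2)]] .
  ultimately show ?thesis
    using cat_assoc[OF catC state_homs(1,2) state_homs(3)[of S, folded meet]]
    by (simp add: state_comp_def)
qed

lemma state_comp_boundary:
  "state_comp (if b then fibre else {})
   = ccomp C (Hm (msubst B \<gamma> (\<xi> \<circ> \<theta>) As i (advance False b) (advance b True)))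
       (ccomp C (vcomp C n m \<zeta> \<xi> \<phi> \<psi> (As[i := if b then a1 else a0]))
         (Fm (msubst B \<alpha> (\<zeta> \<circ> \<sigma>) As i (advance b True) (advance False b))))"
proof -
  let ?S = "if b then fibre else {}" and ?c = "if b then a1 else a0"
  have closed: "successor_closed ?S"
    by (auto simp: successor_closed_def fibre_def pushout_commutes)
  have G_id: "G_arrs ?S = map (cid B) (reidx \<tau> (length \<beta>) (phi_objs ?S))"
    by (intro nth_equalityI) (auto simp: G_arrs_def reidx_def node_obj_def advance_def fibre_def
        pushout_commutes)
  have meet: "reidx \<tau> (length \<beta>) (phi_objs ?S) = reidx \<eta> (length \<beta>) (psi_objs ?S)"
    by (intro nth_equalityI) (auto simp: reidx_def node_obj_def fibre_def pushout_commutes)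
  have arrs: "H_arrs ?S = msubst B \<gamma> (\<xi> \<circ> \<theta>) As i (advance False b) (advance b True)"
    "F_arrs ?S = msubst B \<alpha> (\<zeta> \<circ> \<sigma>) As i (advance b True) (advance False b)"
    by (rule nth_equalityI; auto simp: H_arrs_def F_arrs_def msubst_def fibre_def)+
  have objs: "reidx \<zeta> n (As[i := ?c]) = phi_objs ?S" "reidx \<xi> m (As[i := ?c]) = psi_objs ?S"
    by (rule nth_equalityI; auto simp: reidx_def node_obj_def nth_list_update length_As fibre_def)+
  show ?thesis
    unfolding state_comp_identity_G[OF closed G_id meet] arrs vcomp_def objs ..
qed

lemma finite_fibre: "finite fibre"
proof (rule finite_subset)
  show "fibre \<subseteq> TN ` {..<n} \<union> TM ` {..<m}"
    by (auto simp: fibre_def)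
qed simp

lemma fire_after_successors:
  assumes z: "z \<in> fibre - S" and closed: "successor_closed S"
    and last: "\<And>y. (z, y) \<in> (comp_graph \<alpha> \<beta> \<gamma> \<sigma> \<tau> \<eta> \<theta>)\<^sup>+ \<Longrightarrow> y \<notin> fibre - S"
  shows "successor_closed (insert z S) \<and> state_comp (insert z S) = state_comp S"
proof -
  let ?r = "comp_graph \<alpha> \<beta> \<gamma> \<sigma> \<tau> \<eta> \<theta>"
  have fired: "y \<in> S" if "(z, PB j) \<in> ?r" "(PB j, y) \<in> ?r" "y \<in> fibre" for j y
    using last[of y] that by (meson DiffI r_into_trancl trancl_into_trancl)
  from z consider (TN) k where "z = TN k" "k < n" "\<zeta> k = i" | (TM) k where "z = TM k" "k < m" "\<xi> k = i"
    by (auto simp: fibre_def)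
  then show ?thesis
  proof cases
    case (TN k)
    have "\<forall>j<length \<beta>. \<tau> j = k \<and> \<beta>!j \<longrightarrow> TM (\<eta> j) \<in> S"
      using fired TN by (auto simp: comp_graph_def fibre_def pushout_commutes)
    then show ?thesis
      using TN z closed state_comp_fire_TN[OF TN(2,3) _ closed] by (auto simp: successor_closed_def)
  next
    case (TM k)
    have "\<forall>j<length \<beta>. \<eta> j = k \<and> \<not> \<beta>!j \<longrightarrow> TN (\<tau> j) \<in> S"
      using fired TM by (auto simp: comp_graph_def fibre_def pushout_commutes)
    then show ?thesis
      using TM z closed state_comp_fire_TM[OF TM(2,3) _ closed] by (auto simp: successor_closed_def)
  qed
qed

lemma state_comp_fire_all:
  assumes acyclic: "acyclic (comp_graph \<alpha> \<beta> \<gamma> \<sigma> \<tau> \<eta> \<theta>)"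
  shows "S \<subseteq> fibre \<Longrightarrow> successor_closed S \<Longrightarrow> state_comp S = state_comp fibre"
proof (induction "card (fibre - S)" arbitrary: S rule: less_induct)
  case less
  let ?r = "comp_graph \<alpha> \<beta> \<gamma> \<sigma> \<tau> \<eta> \<theta>"
  show ?case
  proof (cases "S = fibre")
    case False
    have wf: "wf ((?r\<^sup>+)\<inverse>)"
      using wf_trancl[OF finite_acyclic_wf_converse[OF finite_comp_graph acyclic]]
      by (simp add: trancl_converse)
    obtain x where "x \<in> fibre - S"
      using False less.prems(1) by blast
    then obtain z where z: "z \<in> fibre - S"
      and last: "\<And>y. (z, y) \<in> ?r\<^sup>+ \<Longrightarrow> y \<notin> fibre - S"
      using wf_eq_minimal[THEN iffD1, OF wf, rule_format, of x "fibre - S"] by blast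
    have smaller: "card (fibre - insert z S) < card (fibre - S)"
      unfolding Diff_insert[of fibre z S] using card_Diff1_less[OF finite_Diff[OF finite_fibre] z] .
    have sub: "insert z S \<subseteq> fibre"
      using z less.prems(1) by blast
    from fire_after_successors[OF z less.prems(2) last]
    have closed': "successor_closed (insert z S)" and eq: "state_comp (insert z S) = state_comp S"
      by simp_all
    have "state_comp (insert z S) = state_comp fibre"
      by (rule less.hyps[OF smaller sub closed'])
    with eq show ?thesis
      by simp
  qed simp
qed

lemma vcomp_dinatural_square:
  assumes "acyclic (comp_graph \<alpha> \<beta> \<gamma> \<sigma> \<tau> \<eta> \<theta>)"
  shows "ccomp C (Hm (msubst B \<gamma> (\<xi> \<circ> \<theta>) As i (cid B a0) f))
           (ccomp C (vcomp C n m \<zeta> \<xi> \<phi> \<psi> (As[i := a0])) (Fm (msubst B \<alpha> (\<zeta> \<circ> \<sigma>) As i f (cid B a0))))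
       = ccomp C (Hm (msubst B \<gamma> (\<xi> \<circ> \<theta>) As i f (cid B a1)))
           (ccomp C (vcomp C n m \<zeta> \<xi> \<phi> \<psi> (As[i := a1])) (Fm (msubst B \<alpha> (\<zeta> \<circ> \<sigma>) As i (cid B a1) f)))"
  using state_comp_boundary[of False] state_comp_boundary[of True]
    state_comp_fire_all[OF assms, of "{}"]
  by (simp add: advance_def successor_closed_def)

end

theorem mainTheorem4:
  fixes B :: "('o,'m) category" and C :: "('c,'d) category"
    and \<alpha> \<beta> \<gamma> :: "bool list"
    and \<sigma> \<tau> \<eta> \<theta> \<zeta> \<xi> :: "nat \<Rightarrow> nat" and n m l :: nat
    and Fo Go Ho :: "'o list \<Rightarrow> 'c" and Fm Gm Hm :: "'m list \<Rightarrow> 'd"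
    and \<phi> \<psi> :: "'o list \<Rightarrow> 'd"
  assumes "is_category B" and "is_category C"
    and "mvfunctor B C \<alpha> Fo Fm" and "mvfunctor B C \<beta> Go Gm" and "mvfunctor B C \<gamma> Ho Hm"
    and "is_transformation B C \<alpha> \<beta> \<sigma> \<tau> n Fo Go \<phi>"
    and "is_transformation B C \<beta> \<gamma> \<eta> \<theta> m Go Ho \<psi>"
    and "\<forall>i<n. dinatural_in B C \<alpha> \<beta> \<sigma> \<tau> n Fm Gm \<phi> i"
    and "\<forall>i<m. dinatural_in B C \<beta> \<gamma> \<eta> \<theta> m Gm Hm \<psi> i"
    and "is_pushout n m (length \<beta>) \<tau> \<eta> l \<zeta> \<xi>"
    and "acyclic (comp_graph \<alpha> \<beta> \<gamma> \<sigma> \<tau> \<eta> \<theta>)"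
  shows "\<forall>i<l. dinatural_in B C \<alpha> \<gamma> (\<zeta> \<circ> \<sigma>) (\<xi> \<circ> \<theta>) l Fm Hm (vcomp C n m \<zeta> \<xi> \<phi> \<psi>) i"
  using vcomp_dinaturality.vcomp_dinatural_square[OF vcomp_dinaturality.intro[OF assms(1-10)] assms(11)]
  unfolding dinatural_in_def Let_def by blast

end
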